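(* Let $n,s\in\mathbb{N}$, $\varepsilon\in(0,1)$, and suppose $m:=\frac{\varepsilon n}{2s}$ is an integer with $m\ge 3$; put $L:=n/m=\frac{2s}{\varepsilon}$ (an integer). Define $b_0=1$ and $b_k=km-1$ for $k=1,\dots,L$, and $$B=\{1,2\}\cup\{b_k,\,b_k+1 : k=1,\dots,L\}\subseteq[n].$$ Define intervals $I_0=\{2,3,\dots,b_1\}$ and $I_k=\{b_k+1,\dots,b_{k+1}\}$ for $1\le k\le L-1$ (these partition $\{2,\dots,n-1\}$). For $x\in I_k$ ($0\le k\le L-1$) let $P(x)=\{b_k,\,b_k+1,\,x,\,b_{k+1},\,b_{k+1}+1\}$. Let $f:[n]\to\mathbb{R}$ have at most $s$ distinct discrete derivatives, and assume (i) $f$ is $\varepsilon$-far from convex, and (ii) there is a convex $h:B\to\mathbb{R}$ with $|\{y\in B: h(y)\ne f(y)\}|\le \frac{\varepsilon}{32}|B|$. Then $$\bigl|\{x\in\{2,\dots,n-1\} : f|_{P(x)} \text{ is not convex}\}\bigr|\ \ge\ \frac{\varepsilon n}{32}.$$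
   Context: For $f:[n]\to\mathbb{R}$, the discrete derivative at $i\in[n-1]$ is $\Delta_f(i)=f(i+1)-f(i)$; the number of distinct discrete derivatives of $f$ is $|\{\Delta_f(i): i\in[n-1]\}|$. For a finite set $S\subseteq\mathbb{R}$, a function $g:S\to\mathbb{R}$ is convex if $\frac{g(y)-g(x)}{y-x}\le\frac{g(z)-g(y)}{z-y}$ for all $x<y<z$ in $S$. $f$ is $\varepsilon$-far from convex if every convex $g:[n]\to\mathbb{R}$ differs from $f$ on at least $\varepsilon n$ points of $[n]$. *)

theory Defs
  imports Complex_Main
begin

definition convex_on_set :: "nat set \<Rightarrow> (nat \<Rightarrow> real) \<Rightarrow> bool" where
  "convex_on_set S g \<longleftrightarrow>
     (\<forall>x\<in>S. \<forall>y\<in>S. \<forall>z\<in>S. x < y \<and> y < z \<longrightarrow>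
        (g y - g x) / (real y - real x) \<le> (g z - g y) / (real z - real y))"

definition num_derivs :: "nat \<Rightarrow> (nat \<Rightarrow> real) \<Rightarrow> nat" where
  "num_derivs n f = card ((\<lambda>i. f (i + 1) - f i) ` {1..<n})"

definition eps_far_convex :: "nat \<Rightarrow> real \<Rightarrow> (nat \<Rightarrow> real) \<Rightarrow> bool" where
  "eps_far_convex n \<epsilon> f \<longleftrightarrow>
     (\<forall>g. convex_on_set {1..n} g \<longrightarrow> real (card {i\<in>{1..n}. g i \<noteq> f i}) \<ge> \<epsilon> * real n)"

definition bpt :: "nat \<Rightarrow> nat \<Rightarrow> nat" where
  "bpt m k = (if k = 0 then 1 else k * m - 1)"

definition Bset :: "nat \<Rightarrow> nat \<Rightarrow> nat set" where
  "Bset m L = {1, 2} \<union> (\<Union>k\<in>{1..L}. {bpt m k, bpt m k + 1})"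

text \<open>I_0 = {2..b_1}, I_k = {b_k+1..b_(k+1)}; since b_0 + 1 = 2 this is uniform.\<close>
definition Ival :: "nat \<Rightarrow> nat \<Rightarrow> nat set" where
  "Ival m k = {bpt m k + 1 .. bpt m (k + 1)}"

definition Pset :: "nat \<Rightarrow> nat \<Rightarrow> nat \<Rightarrow> nat set" where
  "Pset m k x = {bpt m k, bpt m k + 1, x, bpt m (k + 1), bpt m (k + 1) + 1}"

end

theory Submission
  imports Defs
begin

(* Interpolate the convex h linearly on each block {b_k + 1 .. b_(k+1)}; the result H is convex
   on [n], so the far-from-convex f differs from H on at least \<epsilon> n points. Such a point is
   either a point of B where h and f differ, or lies in a block where
   (a) one of the four corners b_k, b_k + 1, b_(k+1), b_(k+1) + 1 is such a point
       (at most 3 blocks per point of B), or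
   (b) the slope of h across {b_(k+1), b_(k+1) + 1} exceeds that across {b_k, b_k + 1},
       on which h = f (the slopes of h strictly increase along these blocks and are
       derivatives of f, so there are at most s of them, covering at most m s = \<epsilon> n / 2
       points), or
   (c) h has equal slopes across both corner pairs; there convexity of f on P(x) would force
       f x = H x, so f restricted to P(x) is not convex.
   Since few points of B are mismatches, (c) accounts for at least \<epsilon> n / 16 points. *)

lemma diff_mono_of_step:
  fixes g :: "nat \<Rightarrow> real"
  assumes incr: "\<And>i. 1 \<le> i \<Longrightarrow> i + 2 \<le> n \<Longrightarrow> g (i + 1) - g i \<le> g (i + 2) - g (i + 1)"
    and "1 \<le> a" "a \<le> b" "b + 1 \<le> n"
  shows "g (a + 1) - g a \<le> g (b + 1) - g b"
  using \<open>a \<le> b\<close>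
proof (induction b rule: dec_induct)
  case (step j)
  then show ?case
    using incr[of j] \<open>1 \<le> a\<close> \<open>b + 1 \<le> n\<close> by (simp add: numeral_2_eq_2)
qed simp

lemma convex_on_set_of_diff_mono:
  fixes g :: "nat \<Rightarrow> real"
  assumes incr: "\<And>i. 1 \<le> i \<Longrightarrow> i + 2 \<le> n \<Longrightarrow> g (i + 1) - g i \<le> g (i + 2) - g (i + 1)"
  shows "convex_on_set {1..n} g"
  unfolding convex_on_set_def
proof (intro ballI impI)
  fix x y z assume xyz: "x \<in> {1..n}" "y \<in> {1..n}" "z \<in> {1..n}" and "x < y \<and> y < z"
  then have "x < y" "y < z" by auto
  let ?d = "\<lambda>i. g (i + 1) - g i"
  have d_mono: "?d a \<le> ?d b" if "1 \<le> a" "a \<le> b" "b + 1 \<le> n" for a b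
    using diff_mono_of_step[where n = n, OF incr that] .
  have left: "g y - g x \<le> real (y - x) * ?d (y - 1)"
  proof -
    have "g y - g x = (\<Sum>i = x..<y. ?d i)"
      using sum_Suc_diff'[of x y g] \<open>x < y\<close> by simp
    also have "\<dots> \<le> real (card {x..<y}) * ?d (y - 1)"
      by (rule sum_bounded_above) (use d_mono[of _ "y - 1"] xyz in auto)
    finally show ?thesis by simp
  qed
  have right: "real (z - y) * ?d y \<le> g z - g y"
  proof -
    have "real (card {y..<z}) * ?d y \<le> (\<Sum>i = y..<z. ?d i)"
      by (rule sum_bounded_below) (use d_mono[of y] xyz in auto)
    also have "\<dots> = g z - g y"
      using sum_Suc_diff'[of y z g] \<open>y < z\<close> by simp
    finally show ?thesis by simp
  qed
  have mid: "?d (y - 1) \<le> ?d y"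
    using d_mono[of "y - 1" y] xyz \<open>x < y\<close> \<open>y < z\<close> by simp
  have "(g y - g x) / (real y - real x) \<le> ?d (y - 1)"
    using left \<open>x < y\<close> by (simp add: divide_le_eq of_nat_diff mult.commute)
  also have "\<dots> \<le> ?d y" by (rule mid)
  also have "\<dots> \<le> (g z - g y) / (real z - real y)"
    using right \<open>y < z\<close> by (simp add: le_divide_eq of_nat_diff mult.commute)
  finally show "(g y - g x) / (real y - real x) \<le> (g z - g y) / (real z - real y)" .
qed

lemma convex_on_set_five_points_equal_slopes:
  fixes g :: "nat \<Rightarrow> real"
  assumes conv: "convex_on_set {a, b, x, c, d} g"
    and "a < b" "b < x" "x < c" "c < d"
    and outer: "(g b - g a) / (real b - real a) = \<sigma>" "(g d - g c) / (real d - real c) = \<sigma>"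
  shows "g x - g b = \<sigma> * (real x - real b)" and "g c - g x = \<sigma> * (real c - real x)"
proof -
  have slope: "(g q - g p) / (real q - real p) \<le> (g r - g q) / (real r - real q)"
    if "p \<in> {a, b, x, c, d}" "q \<in> {a, b, x, c, d}" "r \<in> {a, b, x, c, d}" "p < q" "q < r" for p q r
    using conv that unfolding convex_on_set_def by blast
  define s1 where "s1 = (g x - g b) / (real x - real b)"
  define s2 where "s2 = (g c - g x) / (real c - real x)"
  have "\<sigma> \<le> s1" "s1 \<le> s2" "s2 \<le> \<sigma>"
    using slope[of a b x] slope[of b x c] slope[of x c d] assms unfolding s1_def s2_def by auto
  then have "s1 = \<sigma>" "s2 = \<sigma>" by linarith+
  then show "g x - g b = \<sigma> * (real x - real b)" and "g c - g x = \<sigma> * (real c - real x)"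
    using \<open>b < x\<close> \<open>x < c\<close> unfolding s1_def s2_def by (simp_all add: divide_eq_eq)
qed

lemma bpt_add_one: "3 \<le> m \<Longrightarrow> 0 < k \<Longrightarrow> bpt m k + 1 = k * m"
  by (cases k) (auto simp: bpt_def)

lemma bpt_Suc_add_one: "3 \<le> m \<Longrightarrow> bpt m (Suc k) + 1 = Suc k * m"
  by (rule bpt_add_one) simp_all

lemma bpt_ge_one: "3 \<le> m \<Longrightarrow> 1 \<le> bpt m k"
  by (cases k) (auto simp: bpt_def)

lemma bpt_add_one_le_bpt_Suc: "3 \<le> m \<Longrightarrow> bpt m k + 1 \<le> bpt m (Suc k)"
  by (cases k) (auto simp: bpt_def)

lemma strict_mono_bpt: "3 \<le> m \<Longrightarrow> strict_mono (bpt m)"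
  using bpt_add_one_le_bpt_Suc by (simp add: strict_mono_Suc_iff Suc_le_eq)

lemma Ival_iff_div: "3 \<le> m \<Longrightarrow> x \<in> Ival m k \<longleftrightarrow> 2 \<le> x \<and> x div m = k"
proof -
  assume m: "3 \<le> m"
  have lower: "bpt m k + 1 \<le> x \<longleftrightarrow> 2 \<le> x \<and> k * m \<le> x"
    using bpt_add_one[OF m, of k] m by (cases k) (auto simp: bpt_def)
  have upper: "x \<le> bpt m (Suc k) \<longleftrightarrow> x < Suc k * m"
    using bpt_Suc_add_one[OF m, of k] by linarith
  have "x div m = k \<longleftrightarrow> k * m \<le> x \<and> x < Suc k * m"
    using m by (auto simp: div_nat_eqI dividend_less_times_div div_times_less_eq_dividend mult.commute)
  then show ?thesis
    unfolding Ival_def using lower upper by auto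
qed

lemma bpt_mem_Ival_iff: "3 \<le> m \<Longrightarrow> bpt m j \<in> Ival m k \<longleftrightarrow> j = Suc k"
  using strict_mono_less[OF strict_mono_bpt, of m k j] strict_mono_less_eq[OF strict_mono_bpt, of m j "Suc k"]
  unfolding Ival_def by auto

lemma card_Ival_le: "3 \<le> m \<Longrightarrow> card (Ival m k) \<le> m"
  unfolding Ival_def using bpt_Suc_add_one[of m k] bpt_add_one[of m k]
  by (cases k) (auto simp: bpt_def)

lemma card_UN_Ival_le: "3 \<le> m \<Longrightarrow> finite K \<Longrightarrow> card (\<Union>k\<in>K. Ival m k) \<le> m * card K"
  using card_UN_le[of K "Ival m"] sum_mono[of K "\<lambda>k. card (Ival m k)" "\<lambda>_. m"] card_Ival_le[of m]
  by (simp add: mult.commute)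

lemma finite_Bset: "finite (Bset m L)"
  unfolding Bset_def by simp

lemma card_Bset_le: "card (Bset m L) \<le> 2 * L + 2"
proof -
  have "card (Bset m L) \<le> card {1::nat, 2} + card (\<Union>k\<in>{1..L}. {bpt m k, bpt m k + 1})"
    unfolding Bset_def by (rule card_Un_le)
  also have "card (\<Union>k\<in>{1..L}. {bpt m k, bpt m k + 1}) \<le> (\<Sum>k\<in>{1..L}. card {bpt m k, bpt m k + 1})"
    by (rule card_UN_le) simp
  also have "\<dots> \<le> (\<Sum>k\<in>{1..L}. 2)" by (rule sum_mono) (simp add: card_insert_le_m1)
  finally show ?thesis by simp
qed

lemma card_Bset_weighted_le: "3 \<le> m \<Longrightarrow> 3 \<le> L \<Longrightarrow> (1 + 3 * m) * card (Bset m L) \<le> 14 * (L * m)"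
proof -
  assume "3 \<le> m" "3 \<le> L"
  then have "2 * L \<le> L * m" "3 * m \<le> L * m" "1 \<le> L * m"
    by (simp_all add: mult_le_mono1 mult_le_mono2 mult.commute[of L])
  moreover have "(1 + 3 * m) * (2 * L + 2) = 2 * L + 2 + 6 * (L * m) + 6 * m"
    by (simp add: algebra_simps)
  ultimately have "(1 + 3 * m) * (2 * L + 2) \<le> 14 * (L * m)" by linarith
  moreover have "(1 + 3 * m) * card (Bset m L) \<le> (1 + 3 * m) * (2 * L + 2)"
    using card_Bset_le[of m L] by (rule mult_le_mono2)
  ultimately show ?thesis by linarith
qed

locale breakpoint_interpolation =
  fixes m L n :: nat and h :: "nat \<Rightarrow> real"
  assumes m_ge_3: "3 \<le> m" and L_pos: "1 \<le> L" and n_eq: "n = L * m"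
    and h_convex: "convex_on_set (Bset m L) h"
begin

definition pair_slope :: "nat \<Rightarrow> real" where
  "pair_slope k = h (bpt m k + 1) - h (bpt m k)"

definition chord_slope :: "nat \<Rightarrow> real" where
  "chord_slope k = (h (bpt m (Suc k)) - h (bpt m k + 1)) / (real (bpt m (Suc k)) - real (bpt m k + 1))"

text \<open>For \<open>x \<ge> 2\<close>, \<open>x div m\<close> is the block \<open>k\<close> with \<open>x \<in> Ival m k\<close> (lemma \<open>Ival_iff_div\<close>).\<close>
definition interp :: "nat \<Rightarrow> real" where
  "interp x = (if x \<le> 1 then h 1
     else h (bpt m (x div m) + 1) + chord_slope (x div m) * (real x - real (bpt m (x div m) + 1)))"

lemma bpt_L_add_one: "bpt m L + 1 = n"
  using bpt_add_one[OF m_ge_3, of L] L_pos n_eq by simp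

lemma bpt_mono: "j \<le> j' \<Longrightarrow> bpt m j \<le> bpt m j'"
  using strict_mono_less_eq[OF strict_mono_bpt[OF m_ge_3]] by blast

lemma bpt_less_iff: "bpt m j < bpt m j' \<longleftrightarrow> j < j'"
  using strict_mono_less[OF strict_mono_bpt[OF m_ge_3]] by blast

lemma bpt_mem_Bset: "k \<le> L \<Longrightarrow> bpt m k \<in> Bset m L"
  unfolding Bset_def by (cases "k = 0") (auto simp: bpt_def)

lemma bpt_add_one_mem_Bset: "k \<le> L \<Longrightarrow> bpt m k + 1 \<in> Bset m L"
  unfolding Bset_def by (cases "k = 0") (auto simp: bpt_def)

lemma h_slope_mono:
  "\<lbrakk>x \<in> Bset m L; y \<in> Bset m L; z \<in> Bset m L; x < y; y < z\<rbrakk> \<Longrightarrow>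
   (h y - h x) / (real y - real x) \<le> (h z - h y) / (real z - real y)"
  using h_convex unfolding convex_on_set_def by blast

lemma pair_slope_le_chord_slope:
  "k < L \<Longrightarrow> bpt m k + 1 < bpt m (Suc k) \<Longrightarrow> pair_slope k \<le> chord_slope k"
  using h_slope_mono[OF bpt_mem_Bset[of k] bpt_add_one_mem_Bset[of k] bpt_mem_Bset[of "Suc k"]]
  unfolding pair_slope_def chord_slope_def by simp

lemma chord_slope_le_pair_slope:
  "k < L \<Longrightarrow> bpt m k + 1 < bpt m (Suc k) \<Longrightarrow> chord_slope k \<le> pair_slope (Suc k)"
  using h_slope_mono[OF bpt_add_one_mem_Bset[of k] bpt_mem_Bset[of "Suc k"] bpt_add_one_mem_Bset[of "Suc k"]]
  unfolding pair_slope_def chord_slope_def by simp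

lemma pair_slope_le_Suc: "k < L \<Longrightarrow> pair_slope k \<le> pair_slope (Suc k)"
proof (cases "bpt m k + 1 = bpt m (Suc k)")
  case True
  assume "k < L"
  \<comment> \<open>The block has no interior (only when \<open>m = 3\<close>, \<open>k = 0\<close>), so the two pairs overlap.\<close>
  let ?p = "bpt m k"
  have "?p + 1 + 1 \<in> Bset m L" using bpt_add_one_mem_Bset[of "Suc k"] \<open>k < L\<close> True by simp
  from h_slope_mono[OF bpt_mem_Bset[of k] bpt_add_one_mem_Bset[of k] this] \<open>k < L\<close>
  have "h (?p + 1) - h ?p \<le> h (?p + 1 + 1) - h (?p + 1)" by simp
  then show ?thesis unfolding pair_slope_def True[symmetric] .
next
  case False
  assume "k < L"
  then show ?thesis
    using False bpt_add_one_le_bpt_Suc[OF m_ge_3, of k]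
      pair_slope_le_chord_slope[of k] chord_slope_le_pair_slope[of k] by simp
qed

lemma pair_slope_mono: "j \<le> j' \<Longrightarrow> j' \<le> L \<Longrightarrow> pair_slope j \<le> pair_slope j'"
proof (induction j' rule: dec_induct)
  case (step i)
  then show ?case using pair_slope_le_Suc[of i] by simp
qed simp

lemma interp_on_Ival:
  "x \<in> Ival m k \<Longrightarrow> interp x = h (bpt m k + 1) + chord_slope k * (real x - real (bpt m k + 1))"
  using Ival_iff_div[OF m_ge_3] unfolding interp_def by auto

lemma interp_bpt_add_one: "interp (bpt m k + 1) = h (bpt m k + 1)"
  using interp_on_Ival[of "bpt m k + 1" k] bpt_add_one_le_bpt_Suc[OF m_ge_3, of k]
  unfolding Ival_def by simp

lemma interp_bpt_Suc: "interp (bpt m (Suc k)) = h (bpt m (Suc k))"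
proof (cases "bpt m k + 1 = bpt m (Suc k)")
  case True
  then show ?thesis using interp_bpt_add_one[of k] by simp
next
  case False
  then have "bpt m k + 1 < bpt m (Suc k)" using bpt_add_one_le_bpt_Suc[OF m_ge_3, of k] by simp
  then show ?thesis
    using interp_on_Ival[of "bpt m (Suc k)" k] unfolding Ival_def chord_slope_def by simp
qed

lemma interp_eq_on_Bset: "y \<in> Bset m L \<Longrightarrow> interp y = h y"
  unfolding Bset_def
proof (elim UnE UN_E insertE)
  assume "y = 1" then show "interp y = h y" by (simp add: interp_def)
next
  assume "y = 2" then show "interp y = h y"
    using interp_bpt_add_one[of 0] by (simp add: bpt_def numeral_2_eq_2)
next
  fix k assume "k \<in> {1..L}" "y = bpt m k"
  then show "interp y = h y" using interp_bpt_Suc[of "k - 1"] by simp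
next
  fix k assume "y = bpt m k + 1"
  then show "interp y = h y" using interp_bpt_add_one by simp
qed simp_all

lemma interp_diff_at_bpt: "j \<le> L \<Longrightarrow> interp (bpt m j + 1) - interp (bpt m j) = pair_slope j"
  using interp_eq_on_Bset bpt_mem_Bset bpt_add_one_mem_Bset unfolding pair_slope_def by simp

lemma interp_diff_on_Ival:
  "i \<in> Ival m k \<Longrightarrow> i + 1 \<in> Ival m k \<Longrightarrow> interp (i + 1) - interp i = chord_slope k"
  by (simp add: interp_on_Ival algebra_simps)

lemma Ival_of_not_bpt:
  assumes "1 \<le> i" "i < n" "i \<notin> bpt m ` {..L}"
  obtains k where "k < L" "i \<in> Ival m k" "i + 1 \<in> Ival m k"
proof -
  have "i \<noteq> bpt m 0" using assms(3) by blast
  then have "2 \<le> i" using assms(1) by (simp add: bpt_def)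
  define k where "k = i div m"
  have i: "i \<in> Ival m k" using Ival_iff_div[OF m_ge_3] \<open>2 \<le> i\<close> unfolding k_def by simp
  have "k < L"
  proof (rule ccontr)
    assume "\<not> k < L"
    then have "bpt m L \<le> bpt m k" using bpt_mono by simp
    then show False using i \<open>i < n\<close> bpt_L_add_one unfolding Ival_def by simp
  qed
  then have "i \<noteq> bpt m (Suc k)" using assms(3) by auto
  then have "i + 1 \<in> Ival m k" using i unfolding Ival_def by simp
  with \<open>k < L\<close> i show ?thesis by (rule that)
qed

lemma interp_diff_le_at_bpt:
  assumes "j \<le> L" "bpt m j + 2 \<le> n"
  shows "interp (bpt m j + 1) - interp (bpt m j) \<le> interp (bpt m j + 2) - interp (bpt m j + 1)"
proof (cases "bpt m j + 1 \<in> bpt m ` {..L}")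
  case True
  then obtain j' where j': "j' \<le> L" "bpt m j + 1 = bpt m j'" by blast
  then have "j \<le> j'" using bpt_less_iff[of j j'] by simp
  then show ?thesis
    using pair_slope_mono j' assms interp_diff_at_bpt[of j] interp_diff_at_bpt[of j']
    by (simp add: numeral_2_eq_2)
next
  case False
  obtain k where k: "k < L" "bpt m j + 1 \<in> Ival m k" "bpt m j + 2 \<in> Ival m k"
    using Ival_of_not_bpt[of "bpt m j + 1"] False assms(2) by (auto simp: numeral_2_eq_2)
  moreover have "bpt m j + 1 \<in> Ival m j"
    using bpt_add_one_le_bpt_Suc[OF m_ge_3] unfolding Ival_def by simp
  ultimately have "k = j" using Ival_iff_div[OF m_ge_3] by auto
  with k have "bpt m j + 1 < bpt m (Suc j)" unfolding Ival_def by simp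
  then show ?thesis
    using pair_slope_le_chord_slope[of j] interp_diff_at_bpt[of j] interp_diff_on_Ival[of "bpt m j + 1" j]
      k \<open>k = j\<close> by (simp add: numeral_2_eq_2)
qed

lemma interp_diff_le_on_Ival:
  assumes "k < L" "i \<in> Ival m k" "i + 1 \<in> Ival m k" "i + 2 \<le> n"
  shows "interp (i + 1) - interp i \<le> interp (i + 2) - interp (i + 1)"
proof (cases "i + 1 \<in> bpt m ` {..L}")
  case True
  then obtain j where j: "j \<le> L" "i + 1 = bpt m j" by blast
  then have "j = Suc k" using assms(3) bpt_mem_Ival_iff[OF m_ge_3] by metis
  with assms(2) j have "bpt m k + 1 < bpt m (Suc k)" unfolding Ival_def by simp
  then show ?thesis
    using chord_slope_le_pair_slope[of k] interp_diff_on_Ival[of i k] interp_diff_at_bpt[of j]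
      assms j \<open>j = Suc k\<close> by (simp add: numeral_2_eq_2)
next
  case False
  obtain k' where k': "i + 1 \<in> Ival m k'" "i + 2 \<in> Ival m k'"
    using Ival_of_not_bpt[of "i + 1"] False assms(4) by (auto simp: numeral_2_eq_2)
  then have "k' = k" using assms(3) Ival_iff_div[OF m_ge_3] by auto
  then show ?thesis
    using interp_diff_on_Ival[of i k] interp_diff_on_Ival[of "i + 1" k] assms k'
    by (simp add: numeral_2_eq_2)
qed

lemma interp_convex: "convex_on_set {1..n} interp"
proof (rule convex_on_set_of_diff_mono)
  fix i assume "1 \<le> i" "i + 2 \<le> n"
  show "interp (i + 1) - interp i \<le> interp (i + 2) - interp (i + 1)"
  proof (cases "i \<in> bpt m ` {..L}")
    case True
    then show ?thesis using interp_diff_le_at_bpt \<open>i + 2 \<le> n\<close> by blast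
  next
    case False
    moreover have "i < n" using \<open>i + 2 \<le> n\<close> by simp
    ultimately show ?thesis
      using Ival_of_not_bpt[OF \<open>1 \<le> i\<close>] interp_diff_le_on_Ival \<open>i + 2 \<le> n\<close> by metis
  qed
qed

definition mismatches :: "(nat \<Rightarrow> real) \<Rightarrow> nat set" where
  "mismatches f = {y \<in> Bset m L. h y \<noteq> f y}"

definition spoiled_blocks :: "(nat \<Rightarrow> real) \<Rightarrow> nat set" where
  "spoiled_blocks f = {k. k < L \<and>
     (\<exists>y \<in> {bpt m k, bpt m k + 1, bpt m (Suc k), bpt m (Suc k) + 1}. h y \<noteq> f y)}"

definition kink_blocks :: "(nat \<Rightarrow> real) \<Rightarrow> nat set" where
  "kink_blocks f = {k. k < L \<and> h (bpt m k) = f (bpt m k) \<and> h (bpt m k + 1) = f (bpt m k + 1)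
     \<and> pair_slope k < pair_slope (Suc k)}"

definition nonconvex_points :: "(nat \<Rightarrow> real) \<Rightarrow> nat set" where
  "nonconvex_points f = {x \<in> {2..n-1}. \<exists>k<L. x \<in> Ival m k \<and> \<not> convex_on_set (Pset m k x) f}"

lemma eq_interp_of_convex_Pset:
  fixes f :: "nat \<Rightarrow> real"
  assumes "k < L"
    and corners: "\<forall>y \<in> {bpt m k, bpt m k + 1, bpt m (Suc k), bpt m (Suc k) + 1}. f y = h y"
    and flat: "pair_slope k = pair_slope (Suc k)"
    and x: "bpt m k + 1 < x" "x < bpt m (Suc k)"
    and conv: "convex_on_set (Pset m k x) f"
  shows "f x = interp x"
proof -
  define b where "b = bpt m k + 1"
  define c where "c = bpt m (Suc k)"
  have "f x - f b = pair_slope k * (real x - real b)" "f c - f x = pair_slope k * (real c - real x)"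
    using convex_on_set_five_points_equal_slopes[of "bpt m k" b x c "c + 1" f "pair_slope k"]
      conv x corners flat unfolding Pset_def pair_slope_def b_def c_def by auto
  then have "h c - h b = pair_slope k * (real c - real b)"
    using corners unfolding b_def c_def by (simp add: algebra_simps)
  then have "chord_slope k = pair_slope k"
    using x unfolding chord_slope_def b_def[symmetric] c_def[symmetric] by simp
  moreover have "x \<in> Ival m k" using x unfolding Ival_def by simp
  ultimately show ?thesis
    using interp_on_Ival \<open>f x - f b = _\<close> corners unfolding b_def by simp
qed

lemma card_spoiled_blocks_le: "card (spoiled_blocks f) \<le> 3 * card (mismatches f)"
proof -
  have fin: "finite (mismatches f)" unfolding mismatches_def using finite_Bset by simp
  \<comment> \<open>A corner \<open>y\<close> of block \<open>k\<close> lies in \<open>[k m - 1, (k + 1) m]\<close>, so \<open>k\<close> is within one of \<open>y div m\<close>.\<close>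
  have "spoiled_blocks f \<subseteq> (\<Union>y\<in>mismatches f. {y div m - 1 .. y div m + 1})"
  proof
    fix k assume "k \<in> spoiled_blocks f"
    then obtain y where "k < L" and y: "y \<in> {bpt m k, bpt m k + 1, bpt m (Suc k), bpt m (Suc k) + 1}"
      "h y \<noteq> f y"
      unfolding spoiled_blocks_def by blast
    then have "y \<in> mismatches f"
      using bpt_mem_Bset[of k] bpt_add_one_mem_Bset[of k] bpt_mem_Bset[of "Suc k"]
        bpt_add_one_mem_Bset[of "Suc k"] unfolding mismatches_def by auto
    have "bpt m k \<le> y" "y \<le> Suc k * m"
      using y bpt_mono[of k "Suc k"] bpt_Suc_add_one[OF m_ge_3, of k] by auto
    moreover have "k * m \<le> bpt m k + 1"
      using bpt_add_one[OF m_ge_3, of k] by (cases k) auto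
    ultimately have "(k - 1) * m \<le> y" using m_ge_3 by (simp add: diff_mult_distrib)
    then have "k - 1 \<le> y div m" using m_ge_3 div_le_mono[of "(k - 1) * m" y m] by simp
    moreover have "y div m \<le> Suc k"
      using m_ge_3 div_le_mono[OF \<open>y \<le> Suc k * m\<close>, of m] by simp
    ultimately show "k \<in> (\<Union>y\<in>mismatches f. {y div m - 1 .. y div m + 1})"
      using \<open>y \<in> mismatches f\<close> by force
  qed
  then have "card (spoiled_blocks f) \<le> card (\<Union>y\<in>mismatches f. {y div m - 1 .. y div m + 1})"
    using fin by (intro card_mono) auto
  also have "\<dots> \<le> (\<Sum>y\<in>mismatches f. card {y div m - 1 .. y div m + 1})"
    by (rule card_UN_le[OF fin])
  also have "\<dots> \<le> (\<Sum>y\<in>mismatches f. 3)" by (rule sum_mono) simp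
  finally show ?thesis by simp
qed

lemma card_kink_blocks_le: "card (kink_blocks f) \<le> num_derivs n f"
proof -
  have "strict_mono_on (kink_blocks f) pair_slope"
  proof (rule strict_mono_onI)
    fix a b assume "a \<in> kink_blocks f" "b \<in> kink_blocks f" "a < b"
    then have "pair_slope a < pair_slope (Suc a)" "pair_slope (Suc a) \<le> pair_slope b"
      using pair_slope_mono[of "Suc a" b] unfolding kink_blocks_def by auto
    then show "pair_slope a < pair_slope b" by linarith
  qed
  then have inj: "inj_on pair_slope (kink_blocks f)" by (rule strict_mono_on_imp_inj_on)
  \<comment> \<open>On a kink block \<open>h\<close> agrees with \<open>f\<close> on the pair \<open>b\<^sub>k, b\<^sub>k + 1\<close>, so its pair slope is a derivative of \<open>f\<close>.\<close>
  have "pair_slope ` kink_blocks f \<subseteq> (\<lambda>i. f (i + 1) - f i) ` {1..<n}"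
  proof
    fix v assume "v \<in> pair_slope ` kink_blocks f"
    then obtain k where k: "k \<in> kink_blocks f" "v = pair_slope k" by blast
    then have "bpt m k < n"
      using bpt_mono[of k L] bpt_L_add_one unfolding kink_blocks_def by fastforce
    moreover have "v = f (bpt m k + 1) - f (bpt m k)"
      using k unfolding kink_blocks_def pair_slope_def by simp
    ultimately show "v \<in> (\<lambda>i. f (i + 1) - f i) ` {1..<n}"
      using bpt_ge_one[OF m_ge_3, of k] by auto
  qed
  then have "card (pair_slope ` kink_blocks f) \<le> num_derivs n f"
    unfolding num_derivs_def by (rule card_mono[rotated]) simp
  then show ?thesis using card_image[OF inj] by simp
qed

lemma disagreements_subset:
  "{i \<in> {1..n}. interp i \<noteq> f i} \<subseteq>
     mismatches f \<union> (\<Union>k \<in> spoiled_blocks f \<union> kink_blocks f. Ival m k) \<union> nonconvex_points f"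
proof
  fix i assume "i \<in> {i \<in> {1..n}. interp i \<noteq> f i}"
  then have i: "1 \<le> i" "i \<le> n" "interp i \<noteq> f i" by auto
  show "i \<in> mismatches f \<union> (\<Union>k \<in> spoiled_blocks f \<union> kink_blocks f. Ival m k) \<union> nonconvex_points f"
  proof (cases "i \<in> Bset m L")
    case True
    then show ?thesis using interp_eq_on_Bset i unfolding mismatches_def by auto
  next
    case False
    then have "i \<noteq> n" using bpt_add_one_mem_Bset[of L] bpt_L_add_one by auto
    with i have "i < n" by simp
    moreover have "i \<notin> bpt m ` {..L}" using False bpt_mem_Bset by auto
    ultimately obtain k where k: "k < L" "i \<in> Ival m k"
      using Ival_of_not_bpt[OF \<open>1 \<le> i\<close>] by blast
    show ?thesis
    proof (cases "k \<in> spoiled_blocks f \<union> kink_blocks f \<or> i \<in> nonconvex_points f")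
      case True
      then show ?thesis using k by blast
    next
      case False
      then have corners: "\<forall>y \<in> {bpt m k, bpt m k + 1, bpt m (Suc k), bpt m (Suc k) + 1}. f y = h y"
        and flat: "pair_slope k = pair_slope (Suc k)"
        using k pair_slope_le_Suc[of k] unfolding spoiled_blocks_def kink_blocks_def by force+
      have "2 \<le> i" "i \<le> n - 1" using k \<open>i < n\<close> Ival_iff_div[OF m_ge_3] by auto
      then have conv: "convex_on_set (Pset m k i) f"
        using False k unfolding nonconvex_points_def by auto
      have "i \<noteq> bpt m k + 1" "i \<noteq> bpt m (Suc k)"
        using \<open>i \<notin> Bset m L\<close> k bpt_add_one_mem_Bset[of k] bpt_mem_Bset[of "Suc k"] by auto
      then have "bpt m k + 1 < i" "i < bpt m (Suc k)" using k unfolding Ival_def by auto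
      then have "f i = interp i" using eq_interp_of_convex_Pset[OF \<open>k < L\<close> corners flat _ _ conv] by simp
      then show ?thesis using i by simp
    qed
  qed
qed

lemma card_disagreements_le:
  "card {i \<in> {1..n}. interp i \<noteq> f i} \<le>
     (1 + 3 * m) * card (mismatches f) + m * num_derivs n f + card (nonconvex_points f)"
proof -
  let ?K = "spoiled_blocks f \<union> kink_blocks f"
  have fin: "finite (mismatches f)" "finite ?K" "finite (nonconvex_points f)"
    using finite_Bset unfolding mismatches_def spoiled_blocks_def kink_blocks_def nonconvex_points_def
    by auto
  have "card {i \<in> {1..n}. interp i \<noteq> f i} \<le>
      card (mismatches f \<union> (\<Union>k \<in> ?K. Ival m k) \<union> nonconvex_points f)"
    using fin by (intro card_mono[OF _ disagreements_subset]) (simp add: Ival_def)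
  also have "\<dots> \<le> card (mismatches f) + card (\<Union>k \<in> ?K. Ival m k) + card (nonconvex_points f)"
    using card_Un_le[of "mismatches f \<union> (\<Union>k \<in> ?K. Ival m k)" "nonconvex_points f"]
      card_Un_le[of "mismatches f" "\<Union>k \<in> ?K. Ival m k"] by linarith
  also have "card (\<Union>k \<in> ?K. Ival m k) \<le> m * (card (spoiled_blocks f) + card (kink_blocks f))"
    by (rule le_trans[OF card_UN_Ival_le[OF m_ge_3 fin(2)] mult_le_mono2[OF card_Un_le]])
  also have "\<dots> \<le> m * (3 * card (mismatches f) + num_derivs n f)"
    using card_spoiled_blocks_le card_kink_blocks_le by (intro mult_le_mono2 add_mono)
  finally show ?thesis by (simp add: algebra_simps)
qed

lemma far_from_convex_bound:
  assumes "num_derivs n f \<le> s" and "eps_far_convex n \<epsilon> f"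
  shows "\<epsilon> * real n \<le> (1 + 3 * real m) * real (card (mismatches f))
    + real m * real s + real (card (nonconvex_points f))"
proof -
  have "\<epsilon> * real n \<le> real (card {i \<in> {1..n}. interp i \<noteq> f i})"
    using assms(2) interp_convex unfolding eps_far_convex_def by blast
  also have "\<dots> \<le> real ((1 + 3 * m) * card (mismatches f) + m * s + card (nonconvex_points f))"
  proof -
    have "card {i \<in> {1..n}. interp i \<noteq> f i} \<le>
        (1 + 3 * m) * card (mismatches f) + m * s + card (nonconvex_points f)"
      using card_disagreements_le[of f] mult_le_mono2[OF assms(1), of m] by linarith
    then show ?thesis by (simp only: of_nat_le_iff)
  qed
  finally show ?thesis by (simp add: algebra_simps)
qed

lemma weighted_card_mismatches_le:
  assumes "3 \<le> L" "0 \<le> \<delta>" "real (card (mismatches f)) \<le> \<delta> * real (card (Bset m L))"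
  shows "(1 + 3 * real m) * real (card (mismatches f)) \<le> \<delta> * (14 * real n)"
proof -
  have "real ((1 + 3 * m) * card (Bset m L)) \<le> real (14 * n)"
    using card_Bset_weighted_le[OF m_ge_3 assms(1)] n_eq by (simp only: of_nat_le_iff)
  then have "(1 + 3 * real m) * real (card (Bset m L)) \<le> 14 * real n" by (simp add: algebra_simps)
  then have "\<delta> * ((1 + 3 * real m) * real (card (Bset m L))) \<le> \<delta> * (14 * real n)"
    using assms(2) by (rule mult_left_mono)
  moreover have "(1 + 3 * real m) * real (card (mismatches f)) \<le> (1 + 3 * real m) * (\<delta> * real (card (Bset m L)))"
    using assms(3) by (rule mult_left_mono) simp
  ultimately show ?thesis by (simp add: algebra_simps)
qed

end

lemma block_parameters:
  fixes n s m L :: nat and \<epsilon> :: real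
  assumes "\<epsilon> < 1" and m: "real m = \<epsilon> * real n / (2 * real s)" "3 \<le> m"
    and L: "real L = real n / real m"
  shows "n = L * m" and "3 \<le> L" and "real m * real s = \<epsilon> * real n / 2"
proof -
  have "real m \<noteq> 0" using m(2) by simp
  then have "s \<noteq> 0" "n \<noteq> 0" unfolding m(1) by auto
  have "real m * (2 * real s) = \<epsilon> * real n" using m(1) \<open>s \<noteq> 0\<close> by simp
  then show ms: "real m * real s = \<epsilon> * real n / 2" by simp
  have Lm: "real n = real L * real m" using L \<open>real m \<noteq> 0\<close> by simp
  then show "n = L * m" by (metis of_nat_eq_iff of_nat_mult)
  have "real m * 2 \<le> real m * (2 * real s)" using \<open>s \<noteq> 0\<close> by (intro mult_left_mono) auto
  also have "\<dots> = \<epsilon> * real n" using ms by simp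
  also have "\<dots> < real n" using \<open>\<epsilon> < 1\<close> \<open>n \<noteq> 0\<close> by simp
  finally have "real m * 2 < real m * real L" using Lm by (simp add: mult.commute)
  then have "2 < L" using m(2) by simp
  then show "3 \<le> L" by simp
qed

theorem mainTheorem6:
  fixes n s m L :: nat and \<epsilon> :: real and f :: "nat \<Rightarrow> real"
  assumes eps: "0 < \<epsilon>" "\<epsilon> < 1"
    and m_def: "real m = \<epsilon> * real n / (2 * real s)"
    and m3: "m \<ge> 3"
    and L_def: "real L = real n / real m"
    and derivs: "num_derivs n f \<le> s"
    and far: "eps_far_convex n \<epsilon> f"
    and hB: "\<exists>h. convex_on_set (Bset m L) h \<and>
               real (card {y\<in>Bset m L. h y \<noteq> f y}) \<le> \<epsilon> / 32 * real (card (Bset m L))"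
  shows "real (card {x\<in>{2..n-1}. \<exists>k<L. x \<in> Ival m k \<and> \<not> convex_on_set (Pset m k x) f})
           \<ge> \<epsilon> * real n / 32"
proof -
  obtain h where h_conv: "convex_on_set (Bset m L) h"
    and h_close: "real (card {y\<in>Bset m L. h y \<noteq> f y}) \<le> \<epsilon> / 32 * real (card (Bset m L))"
    using hB by blast
  have n_eq: "n = L * m" and "3 \<le> L" and ms: "real m * real s = \<epsilon> * real n / 2"
    using block_parameters[OF eps(2) m_def m3 L_def] by auto
  interpret breakpoint_interpolation m L n h
    using m3 \<open>3 \<le> L\<close> n_eq h_conv by unfold_locales auto
  have "\<epsilon> * real n \<le> (1 + 3 * real m) * real (card (mismatches f)) + real m * real s
      + real (card (nonconvex_points f))"
    by (rule far_from_convex_bound[OF derivs far])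
  moreover have "(1 + 3 * real m) * real (card (mismatches f)) \<le> \<epsilon> / 32 * (14 * real n)"
    using weighted_card_mismatches_le[OF \<open>3 \<le> L\<close> _ h_close[folded mismatches_def]] eps by simp
  ultimately have "\<epsilon> * real n / 16 \<le> real (card (nonconvex_points f))" using ms by linarith
  then show ?thesis using eps unfolding nonconvex_points_def by simp
qed

end
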